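(* For every $s>0$, the Laplace transform $\mathcal L_{\mathsf P}(s)=\mathbb E[e^{-s\mathsf P}]$ (without conditioning on the number of points in $\mathcal C$) equals $$\mathcal L_{\mathsf P}(s)=\exp\Big\{-\lambda\pi\,\mathbb E\Big[\min\{D^\alpha,\tfrac{\mathsf g}{T}\}^{\frac2\alpha}\Big(1-e^{-s\mathsf g\max\{D^{-\alpha},\frac T{\mathsf g}\}}\Big)+(s\mathsf g)^{\frac2\alpha}\,\Gamma\Big(1-\tfrac2\alpha,\,s\mathsf g\max\{D^{-\alpha},\tfrac T{\mathsf g}\}\Big)\Big]\Big\}.$$
   Context: $\Phi=\{\mathsf x_i\}$ is a homogeneous Poisson point process on $\mathbb R^2$ with density $\lambda>0$, with i.i.d. marks $\mathsf g_i\ge0$ independent of $\Phi$, $\mathbb E[\mathsf g]=1$, $\mathbb E[\mathsf g^2]<\infty$. Fix $\alpha>2$, $D>0$, $T\ge0$; $\mathcal C=b(o,D)$ is the disk of radius $D$ centered at the origin. The useful power is $\mathsf P=\sum_{\mathsf x_i\in\Phi\cap\mathcal C}\mathsf g_i\|\mathsf x_i\|^{-\alpha}\mathbf 1(\mathsf g_i\|\mathsf x_i\|^{-\alpha}\ge T)$. $\Gamma(a,x)=\int_x^\infty t^{a-1}e^{-t}dt$. Conventions for $T=0$: $\mathsf g/T=+\infty$ and $T/\mathsf g=0$. *)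

theory Defs
  imports "HOL-Probability.Probability"
begin

definition upper_Gamma :: "real \<Rightarrow> real \<Rightarrow> real" where
  "upper_Gamma a x = (LBINT t:{x<..}. t powr (a - 1) * exp (- t))"

definition poisson_random_measure ::
  "'w measure \<Rightarrow> ('w \<Rightarrow> 'b measure) \<Rightarrow> 'b measure \<Rightarrow> bool" where
  "poisson_random_measure M N \<mu> \<longleftrightarrow>
     prob_space M \<and>
     (\<forall>\<omega>\<in>space M. sets (N \<omega>) = sets \<mu>) \<and>
     (\<forall>A\<in>sets \<mu>. (\<lambda>\<omega>. emeasure (N \<omega>) A) \<in> borel_measurable M) \<and>
     (\<forall>A\<in>sets \<mu>. emeasure \<mu> A < \<infinity> \<longrightarrow>
        (\<forall>k::nat. measure M {\<omega>\<in>space M. emeasure (N \<omega>) A = of_nat k}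
             = exp (- enn2real (emeasure \<mu> A)) * enn2real (emeasure \<mu> A) ^ k / fact k)) \<and>
     (\<forall>A\<in>sets \<mu>. emeasure \<mu> A = \<infinity> \<longrightarrow> (AE \<omega> in M. emeasure (N \<omega>) A = \<infinity>)) \<and>
     (\<forall>(I::nat set) A. finite I \<longrightarrow> A ` I \<subseteq> sets \<mu> \<longrightarrow> disjoint_family_on A I \<longrightarrow>
        prob_space.indep_vars M (\<lambda>_. borel) (\<lambda>i \<omega>. emeasure (N \<omega>) (A i)) I)"

text \<open>Intensity of the independently marked homogeneous PPP on R^2 with density lambda
  and mark distribution G: lambda * Lebesgue (x) G on R^2 x R.\<close>
definition marked_intensity :: "real \<Rightarrow> real measure \<Rightarrow> ((real \<times> real) \<times> real) measure" where
  "marked_intensity lam G = scale_measure (ennreal lam) (lborel \<Otimes>\<^sub>M G)"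

definition useful_contrib :: "real \<Rightarrow> real \<Rightarrow> real \<Rightarrow> (real \<times> real) \<times> real \<Rightarrow> real" where
  "useful_contrib \<alpha> D T z =
     (let x = fst z; g = snd z in
        indicator (cball 0 D) x * (if g * norm x powr (- \<alpha>) \<ge> T then g * norm x powr (- \<alpha>) else 0))"

text \<open>Useful power P = sum over the marked points of the contributions (integral w.r.t. the
  counting measure N(omega)).\<close>
definition useful_power ::
  "('w \<Rightarrow> ((real \<times> real) \<times> real) measure) \<Rightarrow> real \<Rightarrow> real \<Rightarrow> real \<Rightarrow> 'w \<Rightarrow> real" where
  "useful_power N \<alpha> D T \<omega> = enn2real (\<integral>\<^sup>+ z. ennreal (useful_contrib \<alpha> D T z) \<partial>N \<omega>)"

text \<open>min{D^alpha, g/T} with the convention g/T = +infinity for T = 0.\<close>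
definition min_DT :: "real \<Rightarrow> real \<Rightarrow> real \<Rightarrow> real \<Rightarrow> real" where
  "min_DT \<alpha> D T g = (if T = 0 then D powr \<alpha> else min (D powr \<alpha>) (g / T))"

text \<open>max{D^(-alpha), T/g} with the convention T/g = 0 for T = 0 (for g = 0 the value is
  irrelevant since it is multiplied by g = 0).\<close>
definition max_DT :: "real \<Rightarrow> real \<Rightarrow> real \<Rightarrow> real \<Rightarrow> real" where
  "max_DT \<alpha> D T g = (if T = 0 then D powr (- \<alpha>) else max (D powr (- \<alpha>)) (T / g))"

end

theory Submission
  imports Defs
begin

(* The Laplace functional of a Poisson random measure N with intensity mu is
     E exp (- integral f dN) = exp (- integral (1 - exp (- f)) dmu).
   For a simple f this follows from the independence of the counts of disjoint sets
   and the Laplace transform of the Poisson distribution; general f are reached by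
   monotone approximation.  With f = s * (useful contribution) and mu = lambda * Lebesgue (x) G,
   the exponent is lambda * E_g of a planar integral, computed by the layer-cake formula:
   for t > 0 the superlevel set {x. s g |x|^-alpha 1(...) >= t} is the punctured disc of radius
   min (D^alpha, g/T, s g/t)^(1/alpha).  Integrating its area pi min(...)^(2/alpha) against
   exp (- t) splits at t0 = s g max (D^-alpha, T/g) into the two terms of the formula,
   the second being an upper incomplete Gamma function. *)


section \<open>Laplace functional of a Poisson random measure\<close>

lemma poisson_random_measureD:
  assumes "poisson_random_measure M N \<mu>"
  shows poisson_random_measure_prob_space: "prob_space M"
    and poisson_random_measure_sets: "\<And>\<omega>. \<omega> \<in> space M \<Longrightarrow> sets (N \<omega>) = sets \<mu>"
    and poisson_random_measure_measurable:
      "\<And>A. A \<in> sets \<mu> \<Longrightarrow> (\<lambda>\<omega>. emeasure (N \<omega>) A) \<in> borel_measurable M"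
    and poisson_random_measure_count_distr: "\<And>A k. A \<in> sets \<mu> \<Longrightarrow> emeasure \<mu> A < \<infinity> \<Longrightarrow>
        measure M {\<omega>\<in>space M. emeasure (N \<omega>) A = of_nat k}
             = exp (- enn2real (emeasure \<mu> A)) * enn2real (emeasure \<mu> A) ^ k / fact k"
    and poisson_random_measure_indep: "\<And>(I::nat set) A. finite I \<Longrightarrow> A ` I \<subseteq> sets \<mu> \<Longrightarrow>
        disjoint_family_on A I \<Longrightarrow> prob_space.indep_vars M (\<lambda>_. borel) (\<lambda>i \<omega>. emeasure (N \<omega>) (A i)) I"
  using assms unfolding poisson_random_measure_def by simp_all

lemma poisson_random_measure_space:
  "poisson_random_measure M N \<mu> \<Longrightarrow> \<omega> \<in> space M \<Longrightarrow> space (N \<omega>) = space \<mu>"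
  by (metis poisson_random_measure_sets sets_eq_imp_space_eq)

lemma poisson_random_measure_AE_count_nat:
  assumes P: "poisson_random_measure M N \<mu>" and A: "A \<in> sets \<mu>" "emeasure \<mu> A < \<infinity>"
  shows "AE \<omega> in M. \<exists>k::nat. emeasure (N \<omega>) A = of_nat k"
proof -
  interpret prob_space M using poisson_random_measure_prob_space[OF P] .
  note [measurable] = poisson_random_measure_measurable[OF P A(1)]
  define E where "E k = {\<omega>\<in>space M. emeasure (N \<omega>) A = of_nat k}" for k :: nat
  have E[measurable]: "E k \<in> sets M" for k unfolding E_def by measurable
  define m where "m = enn2real (emeasure \<mu> A)"
  have "(\<lambda>k. prob (E k)) sums prob (\<Union>k. E k)"
    by (rule measure_UNION) (auto simp: disjoint_family_on_def E_def)
  moreover have "(\<lambda>k. prob (E k)) = (\<lambda>k. exp (- m) * (m ^ k /\<^sub>R fact k))"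
    by (auto simp: E_def poisson_random_measure_count_distr[OF P A] m_def fun_eq_iff divide_inverse)
  moreover have "(\<lambda>k. exp (- m) * (m ^ k /\<^sub>R fact k)) sums (exp (- m) * exp m)"
    by (intro sums_mult exp_converges)
  ultimately have "prob (\<Union>k. E k) = 1"
    by (metis sums_unique2 exp_minus_inverse mult.commute)
  then have "AE \<omega> in M. \<omega> \<in> (\<Union>k. E k)" by (rule AE_prob_1)
  then show ?thesis by (auto simp: E_def)
qed

lemma poisson_random_measure_AE_count_finite:
  "poisson_random_measure M N \<mu> \<Longrightarrow> A \<in> sets \<mu> \<Longrightarrow> emeasure \<mu> A < \<infinity> \<Longrightarrow>
    AE \<omega> in M. emeasure (N \<omega>) A < \<infinity>"
  by (drule (2) poisson_random_measure_AE_count_nat) (auto simp: of_nat_less_top)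

lemma poisson_random_measure_laplace_count:
  assumes P: "poisson_random_measure M N \<mu>" and A: "A \<in> sets \<mu>" "emeasure \<mu> A < \<infinity>" and a: "0 \<le> a"
  shows "(\<integral>\<omega>. exp (- (a * enn2real (emeasure (N \<omega>) A))) \<partial>M)
       = exp (- (enn2real (emeasure \<mu> A) * (1 - exp (- a))))"
proof -
  interpret prob_space M using poisson_random_measure_prob_space[OF P] .
  note [measurable] = poisson_random_measure_measurable[OF P A(1)]
  define E where "E k = {\<omega>\<in>space M. emeasure (N \<omega>) A = of_nat k}" for k :: nat
  have E[measurable]: "E k \<in> sets M" for k unfolding E_def by measurable
  define m where "m = enn2real (emeasure \<mu> A)"
  have "AE \<omega> in M. ennreal (exp (- (a * enn2real (emeasure (N \<omega>) A))))
      = (\<Sum>k. ennreal (exp (- a * real k)) * indicator (E k) \<omega>)"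
    using poisson_random_measure_AE_count_nat[OF P A] AE_space
  proof eventually_elim
    case (elim \<omega>)
    then obtain j where j: "emeasure (N \<omega>) A = of_nat j" by auto
    have "(\<Sum>k. ennreal (exp (- a * real k)) * indicator (E k) \<omega>)
        = (\<Sum>k\<in>{j}. ennreal (exp (- a * real k)) * indicator (E k) \<omega>)"
      by (rule suminf_finite) (auto simp: E_def j indicator_def)
    then show ?case
      using elim by (auto simp: E_def j indicator_def)
  qed
  then have "(\<integral>\<^sup>+\<omega>. ennreal (exp (- (a * enn2real (emeasure (N \<omega>) A)))) \<partial>M)
      = (\<integral>\<^sup>+\<omega>. (\<Sum>k. ennreal (exp (- a * real k)) * indicator (E k) \<omega>) \<partial>M)"
    by (rule nn_integral_cong_AE)
  also have "\<dots> = (\<Sum>k. \<integral>\<^sup>+\<omega>. ennreal (exp (- a * real k)) * indicator (E k) \<omega> \<partial>M)"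
    by (rule nn_integral_suminf) measurable
  also have "\<dots> = (\<Sum>k. ennreal (exp (- a * real k) * (exp (- m) * m ^ k / fact k)))"
    by (simp add: nn_integral_cmult_indicator emeasure_eq_measure E_def
          poisson_random_measure_count_distr[OF P A] m_def ennreal_mult'[symmetric])
  also have "\<dots> = ennreal (exp (- m) * exp (m * exp (- a)))"
  proof (rule suminf_ennreal_eq)
    have "(\<lambda>k. exp (- m) * ((m * exp (- a)) ^ k /\<^sub>R fact k)) sums (exp (- m) * exp (m * exp (- a)))"
      by (intro sums_mult exp_converges)
    then show "(\<lambda>k. exp (- a * real k) * (exp (- m) * m ^ k / fact k)) sums (exp (- m) * exp (m * exp (- a)))"
      by (simp add: power_mult_distrib exp_of_nat2_mult[symmetric] divide_inverse mult_ac)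
  qed (simp add: m_def)
  finally have "(\<integral>\<omega>. exp (- (a * enn2real (emeasure (N \<omega>) A))) \<partial>M) = exp (- m) * exp (m * exp (- a))"
    by (subst integral_eq_nn_integral) auto
  then show ?thesis
    by (simp add: m_def exp_add[symmetric] algebra_simps)
qed

lemma poisson_random_measure_laplace_disjoint_sum:
  fixes I :: "'i set"
  assumes P: "poisson_random_measure M N \<mu>" and I: "finite I"
    and A: "\<And>i. i \<in> I \<Longrightarrow> A i \<in> sets \<mu>" "\<And>i. i \<in> I \<Longrightarrow> emeasure \<mu> (A i) < \<infinity>"
    and disj: "disjoint_family_on A I" and a: "\<And>i. i \<in> I \<Longrightarrow> 0 \<le> a i"
  shows "(\<integral>\<omega>. exp (- (\<Sum>i\<in>I. a i * enn2real (emeasure (N \<omega>) (A i)))) \<partial>M)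
       = exp (- (\<Sum>i\<in>I. enn2real (emeasure \<mu> (A i)) * (1 - exp (- a i))))"
proof -
  interpret prob_space M using poisson_random_measure_prob_space[OF P] .
  \<comment> \<open>independence is only postulated for families indexed by natural numbers\<close>
  obtain h where h: "bij_betw h {0..<card I} I"
    using ex_bij_betw_nat_finite[OF I] by blast
  define J where "J = {0..<card I}"
  define X where "X j \<omega> = exp (- (a (h j) * enn2real (emeasure (N \<omega>) (A (h j)))))" for j \<omega>
  have hJ: "j \<in> J \<Longrightarrow> h j \<in> I" for j using h by (auto simp: J_def bij_betw_def)
  have disj': "disjoint_family_on (\<lambda>j. A (h j)) J"
    unfolding disjoint_family_on_def
  proof (intro ballI impI)
    fix m n assume "m \<in> J" "n \<in> J" "m \<noteq> n"
    then have "h m \<noteq> h n" using h by (auto simp: J_def bij_betw_def dest: inj_onD)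
    then show "A (h m) \<inter> A (h n) = {}"
      using disjoint_family_onD[OF disj] hJ \<open>m \<in> J\<close> \<open>n \<in> J\<close> by simp
  qed
  have "indep_vars (\<lambda>_. borel) (\<lambda>j \<omega>. emeasure (N \<omega>) (A (h j))) J"
    using A hJ by (intro poisson_random_measure_indep[OF P _ _ disj']) (auto simp: J_def)
  then have indep: "indep_vars (\<lambda>_. borel) X J"
    unfolding X_def by (rule indep_vars_compose2[where Y="\<lambda>j x. exp (- (a (h j) * enn2real x))"]) auto
  have X: "integrable M (X j)" if "j \<in> J" for j
  proof (rule integrable_const_bound[where B=1])
    show "AE x in M. norm (X j x) \<le> 1" using a[OF hJ[OF that]] by (auto simp: X_def)
    show "X j \<in> borel_measurable M"
      unfolding X_def using poisson_random_measure_measurable[OF P A(1)[OF hJ[OF that]]] by measurable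
  qed
  have "(\<Prod>j\<in>J. X j \<omega>) = exp (- (\<Sum>i\<in>I. a i * enn2real (emeasure (N \<omega>) (A i))))" for \<omega>
    using prod.reindex_bij_betw[OF h, of "\<lambda>i. exp (- (a i * enn2real (emeasure (N \<omega>) (A i))))"]
    by (simp add: X_def J_def exp_sum I sum_negf[symmetric])
  then have "(\<integral>\<omega>. exp (- (\<Sum>i\<in>I. a i * enn2real (emeasure (N \<omega>) (A i)))) \<partial>M)
      = (\<integral>\<omega>. (\<Prod>j\<in>J. X j \<omega>) \<partial>M)"
    by simp
  also have "\<dots> = (\<Prod>j\<in>J. \<integral>\<omega>. X j \<omega> \<partial>M)"
    by (rule indep_vars_lebesgue_integral[OF _ indep X]) (simp add: J_def)
  also have "\<dots> = (\<Prod>j\<in>J. exp (- (enn2real (emeasure \<mu> (A (h j))) * (1 - exp (- a (h j))))))"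
    using A a hJ by (intro prod.cong refl) (simp add: X_def poisson_random_measure_laplace_count[OF P])
  also have "\<dots> = exp (- (\<Sum>i\<in>I. enn2real (emeasure \<mu> (A i)) * (1 - exp (- a i))))"
    using prod.reindex_bij_betw[OF h, of "\<lambda>i. exp (- (enn2real (emeasure \<mu> (A i)) * (1 - exp (- a i))))"]
    by (simp add: J_def exp_sum I sum_negf[symmetric])
  finally show ?thesis .
qed

lemma poisson_random_measure_AE_eventually_empty:
  assumes P: "poisson_random_measure M N \<mu>" and dec: "decseq A"
    and A: "\<And>k. A k \<in> sets \<mu>" "\<And>k. emeasure \<mu> (A k) < \<infinity>" and empty: "(\<Inter>k. A k) = {}"
  shows "AE \<omega> in M. \<exists>k. emeasure (N \<omega>) (A k) = 0"
proof -
  interpret prob_space M using poisson_random_measure_prob_space[OF P] .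
  note [measurable] = poisson_random_measure_measurable[OF P A(1)]
  define m where "m k = enn2real (emeasure \<mu> (A k))" for k
  have "(\<lambda>k. emeasure \<mu> (A k)) \<longlonglongrightarrow> emeasure \<mu> (\<Inter>k. A k)"
    using A by (intro Lim_emeasure_decseq dec) (auto simp: less_top)
  then have "m \<longlonglongrightarrow> 0"
    unfolding m_def empty using tendsto_enn2real[of _ 0] by simp
  then have lim: "(\<lambda>k. 1 - exp (- m k)) \<longlonglongrightarrow> 0"
    by (auto intro!: tendsto_eq_intros)
  define Bad where "Bad = {\<omega>\<in>space M. \<forall>k. emeasure (N \<omega>) (A k) \<noteq> 0}"
  have [measurable]: "Bad \<in> sets M" unfolding Bad_def by measurable
  have "prob Bad \<le> 1 - exp (- m k)" for k
  proof -
    have "prob Bad \<le> prob (space M - {\<omega>\<in>space M. emeasure (N \<omega>) (A k) = of_nat 0})"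
      by (intro finite_measure_mono) (auto simp: Bad_def)
    also have "\<dots> = 1 - exp (- m k)"
      using poisson_random_measure_count_distr[OF P A(1,2), of k 0] by (simp add: prob_compl m_def)
    finally show ?thesis .
  qed
  then have "prob Bad \<le> 0" by (intro LIMSEQ_le_const[OF lim]) auto
  then have "prob (space M - Bad) = 1" by (simp add: prob_compl measure_le_0_iff)
  then have "AE \<omega> in M. \<omega> \<in> space M - Bad" by (rule AE_prob_1)
  then show ?thesis by eventually_elim (auto simp: Bad_def)
qed

lemma poisson_random_measure_AE_nn_integral_finite:
  assumes P: "poisson_random_measure M N \<mu>" and f: "f \<in> borel_measurable \<mu>" "\<And>x. 0 \<le> f x"
    and B: "B \<in> sets \<mu>" "emeasure \<mu> B < \<infinity>" and fB: "\<And>x. x \<in> space \<mu> \<Longrightarrow> x \<notin> B \<Longrightarrow> f x = 0"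
  shows "AE \<omega> in M. (\<integral>\<^sup>+x. ennreal (f x) \<partial>N \<omega>) < \<infinity>"
proof -
  \<comment> \<open>the sets \<open>A k\<close> shrink to the empty set, so a.s. one of them carries no point,
    and then the integral is at most \<open>k * N B\<close>\<close>
  define A where "A k = {x\<in>space \<mu>. real k \<le> f x} \<inter> B" for k :: nat
  have A[measurable]: "A k \<in> sets \<mu>" for k unfolding A_def using f(1) B(1) by measurable
  have A_fin: "emeasure \<mu> (A k) < \<infinity>" for k
    using emeasure_mono[of "A k" B \<mu>] B by (auto simp: A_def)
  have "(\<Inter>k. A k) = {}"
  proof safe
    fix x assume "x \<in> (\<Inter>k. A k)"
    moreover obtain k :: nat where "f x < real k" using reals_Archimedean2 by blast
    ultimately show "x \<in> {}" by (auto simp: A_def dest!: spec[of _ k])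
  qed
  moreover have "decseq A" by (auto simp: decseq_def A_def)
  ultimately have "AE \<omega> in M. \<exists>k. emeasure (N \<omega>) (A k) = 0"
    by (intro poisson_random_measure_AE_eventually_empty[OF P _ A A_fin])
  then show ?thesis
    using poisson_random_measure_AE_count_finite[OF P B] AE_space
  proof eventually_elim
    case (elim \<omega>)
    then obtain k where k: "emeasure (N \<omega>) (A k) = 0" by auto
    have sets_N: "sets (N \<omega>) = sets \<mu>" and space_N: "space (N \<omega>) = space \<mu>"
      using elim poisson_random_measure_sets[OF P] poisson_random_measure_space[OF P] by auto
    have "(\<integral>\<^sup>+x. ennreal (f x) \<partial>N \<omega>)
        \<le> (\<integral>\<^sup>+x. ennreal (real k) * indicator B x + \<infinity> * indicator (A k) x \<partial>N \<omega>)"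
      using fB by (intro nn_integral_mono) (auto simp: space_N A_def indicator_def ennreal_leI)
    also have "\<dots> = ennreal (real k) * emeasure (N \<omega>) B + \<infinity> * emeasure (N \<omega>) (A k)"
      using sets_N B(1) by (simp add: nn_integral_add nn_integral_cmult_indicator)
    also have "\<dots> < \<infinity>"
      using k elim by (simp add: ennreal_mult_less_top)
    finally show ?case .
  qed
qed

lemma poisson_random_measure_nn_integral_simple:
  assumes P: "poisson_random_measure M N \<mu>" and \<omega>: "\<omega> \<in> space M" and F: "simple_function \<mu> F"
  shows "(\<integral>\<^sup>+x. F x \<partial>N \<omega>) = (\<Sum>v\<in>F ` space \<mu>. v * emeasure (N \<omega>) (F -` {v} \<inter> space \<mu>))"
proof -
  have "sets (N \<omega>) = sets \<mu>" "space (N \<omega>) = space \<mu>"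
    using poisson_random_measure_sets[OF P \<omega>] poisson_random_measure_space[OF P \<omega>] .
  moreover from this have "simple_function (N \<omega>) F"
    using F simple_function_cong_algebra[of "N \<omega>" \<mu> F] by simp
  ultimately show ?thesis
    by (simp add: nn_integral_eq_simple_integral simple_integral_def)
qed

lemma measurable_poisson_random_measure_nn_integral:
  assumes P: "poisson_random_measure M N \<mu>" and f: "f \<in> borel_measurable \<mu>"
  shows "(\<lambda>\<omega>. \<integral>\<^sup>+x. f x \<partial>N \<omega>) \<in> borel_measurable M"
proof -
  obtain F where F: "\<And>i. simple_function \<mu> (F i)" "incseq F" "\<And>i x. F i x < top"
    "\<And>x. (SUP i. F i x) = f x"
    using borel_measurable_implies_simple_function_sequence'[OF f] by blast
  have "(\<lambda>\<omega>. \<integral>\<^sup>+x. F i x \<partial>N \<omega>) \<in> borel_measurable M" for i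
  proof -
    have "(\<lambda>\<omega>. \<Sum>v\<in>F i ` space \<mu>. v * emeasure (N \<omega>) (F i -` {v} \<inter> space \<mu>)) \<in> borel_measurable M"
    proof (rule borel_measurable_sum)
      fix v assume "v \<in> F i ` space \<mu>"
      then have [measurable]: "(\<lambda>\<omega>. emeasure (N \<omega>) (F i -` {v} \<inter> space \<mu>)) \<in> borel_measurable M"
        by (intro poisson_random_measure_measurable[OF P] simple_functionD(2)[OF F(1)])
      show "(\<lambda>\<omega>. v * emeasure (N \<omega>) (F i -` {v} \<inter> space \<mu>)) \<in> borel_measurable M" by measurable
    qed
    then show ?thesis
      by (rule measurable_cong[THEN iffD1, rotated])
         (simp add: poisson_random_measure_nn_integral_simple[OF P _ F(1)])
  qed
  then have "(\<lambda>\<omega>. SUP i. \<integral>\<^sup>+x. F i x \<partial>N \<omega>) \<in> borel_measurable M" by measurable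
  moreover have "(SUP i. \<integral>\<^sup>+x. F i x \<partial>N \<omega>) = (\<integral>\<^sup>+x. f x \<partial>N \<omega>)" if "\<omega> \<in> space M" for \<omega>
    unfolding F(4)[symmetric]
    by (intro nn_integral_monotone_convergence_SUP[OF F(2), symmetric])
       (simp add: measurable_cong_sets[OF poisson_random_measure_sets[OF P that] refl]
          borel_measurable_simple_function[OF F(1)])
  ultimately show ?thesis by (rule measurable_cong[THEN iffD1, rotated])
qed

lemma integral_simple_function_comp:
  fixes \<phi> :: "ennreal \<Rightarrow> real"
  assumes F: "simple_function \<mu> F" and \<phi>: "\<phi> 0 = 0"
    and F_fin: "\<And>v. v \<in> F ` space \<mu> - {0} \<Longrightarrow> emeasure \<mu> (F -` {v} \<inter> space \<mu>) < \<infinity>"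
  shows "(\<integral>x. \<phi> (F x) \<partial>\<mu>) = (\<Sum>v\<in>F ` space \<mu> - {0}. \<phi> v * measure \<mu> (F -` {v} \<inter> space \<mu>))"
proof -
  define S where "S = F ` space \<mu> - {0}"
  define A where "A v = F -` {v} \<inter> space \<mu>" for v
  have S: "finite S" using simple_functionD(1)[OF F] by (simp add: S_def)
  have A: "v \<in> S \<Longrightarrow> A v \<in> sets \<mu>" for v
    unfolding A_def S_def by (intro simple_functionD(2)[OF F])
  have "(\<Sum>v\<in>S. \<phi> v * measure \<mu> (A v)) = (\<Sum>v\<in>S. \<integral>x. \<phi> v * indicator (A v) x \<partial>\<mu>)"
    by (intro sum.cong refl) (simp add: A)
  also have "\<dots> = (\<integral>x. (\<Sum>v\<in>S. \<phi> v * indicator (A v) x) \<partial>\<mu>)"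
    by (rule Bochner_Integration.integral_sum[symmetric])
       (use A F_fin in \<open>auto simp: integrable_indicator_iff S_def A_def\<close>)
  also have "\<dots> = (\<integral>x. \<phi> (F x) \<partial>\<mu>)"
  proof (intro Bochner_Integration.integral_cong refl)
    fix x assume x: "x \<in> space \<mu>"
    have "(\<Sum>v\<in>S. \<phi> v * indicator (A v) x) = (\<Sum>v\<in>S. if v = F x then \<phi> v else 0)"
      using x by (intro sum.cong refl) (auto simp: A_def)
    also have "\<dots> = (if F x \<in> S then \<phi> (F x) else 0)"
      using S by (rule sum.delta)
    also have "\<dots> = \<phi> (F x)"
      using x \<phi> by (auto simp: S_def)
    finally show "(\<Sum>v\<in>S. \<phi> v * indicator (A v) x) = \<phi> (F x)" .
  qed
  finally show ?thesis by (simp add: S_def A_def)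
qed

lemma poisson_random_measure_laplace_simple:
  assumes P: "poisson_random_measure M N \<mu>" and F: "simple_function \<mu> F" "\<And>x. F x < \<infinity>"
    and B: "B \<in> sets \<mu>" "emeasure \<mu> B < \<infinity>" and FB: "\<And>x. x \<in> space \<mu> \<Longrightarrow> F x \<noteq> 0 \<Longrightarrow> x \<in> B"
  shows "(\<integral>\<omega>. exp (- enn2real (\<integral>\<^sup>+x. F x \<partial>N \<omega>)) \<partial>M) = exp (- (\<integral>x. 1 - exp (- enn2real (F x)) \<partial>\<mu>))"
proof -
  define S where "S = F ` space \<mu> - {0}"
  define A where "A v = F -` {v} \<inter> space \<mu>" for v
  have S: "finite S" using simple_functionD(1)[OF F(1)] by (simp add: S_def)
  have A: "v \<in> S \<Longrightarrow> A v \<in> sets \<mu>" for v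
    unfolding A_def S_def by (intro simple_functionD(2)[OF F(1)])
  have A_fin: "v \<in> S \<Longrightarrow> emeasure \<mu> (A v) < \<infinity>" for v
    using emeasure_mono[of "A v" B \<mu>] B FB by (fastforce simp: A_def S_def)
  have disj: "disjoint_family_on A S" by (auto simp: disjoint_family_on_def A_def)
  have integral_F: "(\<integral>\<^sup>+x. F x \<partial>N \<omega>) = (\<Sum>v\<in>S. v * emeasure (N \<omega>) (A v))" if "\<omega> \<in> space M" for \<omega>
    unfolding poisson_random_measure_nn_integral_simple[OF P that F(1)] S_def A_def
    by (rule sum.mono_neutral_right) (auto simp: simple_functionD(1)[OF F(1)])
  have "AE \<omega> in M. \<forall>v\<in>S. emeasure (N \<omega>) (A v) < \<infinity>"
    by (rule AE_finite_allI[OF S], rule poisson_random_measure_AE_count_finite[OF P]) (blast intro: A A_fin)+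
  then have AE_eq: "AE \<omega> in M. exp (- enn2real (\<integral>\<^sup>+x. F x \<partial>N \<omega>))
      = exp (- (\<Sum>v\<in>S. enn2real v * enn2real (emeasure (N \<omega>) (A v))))"
    using AE_space
  proof eventually_elim
    case (elim \<omega>)
    have "v \<in> S \<Longrightarrow> v < \<infinity>" for v using F(2) by (auto simp: S_def)
    with elim show ?case
      by (simp add: integral_F enn2real_sum enn2real_mult ennreal_mult_less_top)
  qed
  have [measurable]: "(\<lambda>\<omega>. \<Sum>v\<in>S. enn2real v * enn2real (emeasure (N \<omega>) (A v))) \<in> borel_measurable M"
  proof (rule borel_measurable_sum)
    fix v assume "v \<in> S"
    note [measurable] = poisson_random_measure_measurable[OF P A[OF this]]
    show "(\<lambda>\<omega>. enn2real v * enn2real (emeasure (N \<omega>) (A v))) \<in> borel_measurable M" by measurable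
  qed
  note [measurable] =
    measurable_poisson_random_measure_nn_integral[OF P borel_measurable_simple_function[OF F(1)]]
  have "(\<integral>\<omega>. exp (- enn2real (\<integral>\<^sup>+x. F x \<partial>N \<omega>)) \<partial>M)
      = (\<integral>\<omega>. exp (- (\<Sum>v\<in>S. enn2real v * enn2real (emeasure (N \<omega>) (A v)))) \<partial>M)"
    by (rule integral_cong_AE[OF _ _ AE_eq]; measurable)
  also have "\<dots> = exp (- (\<Sum>v\<in>S. enn2real (emeasure \<mu> (A v)) * (1 - exp (- enn2real v))))"
    by (rule poisson_random_measure_laplace_disjoint_sum[OF P S _ _ disj]) (blast intro: A A_fin enn2real_nonneg)+
  also have "(\<Sum>v\<in>S. enn2real (emeasure \<mu> (A v)) * (1 - exp (- enn2real v)))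
      = (\<integral>x. 1 - exp (- enn2real (F x)) \<partial>\<mu>)"
    using A_fin
    by (subst integral_simple_function_comp[OF F(1)]) (auto simp: S_def A_def measure_def mult.commute)
  finally show ?thesis .
qed

lemma tendsto_enn2real_SUP:
  fixes u :: "nat \<Rightarrow> ennreal"
  assumes "incseq u" "(SUP n. u n) < \<infinity>"
  shows "(\<lambda>n. enn2real (u n)) \<longlonglongrightarrow> enn2real (SUP n. u n)"
proof (rule tendsto_enn2real)
  show "u \<longlonglongrightarrow> ennreal (enn2real (SUP n. u n))"
    using LIMSEQ_SUP[OF assms(1)] assms(2) by (simp add: less_top)
qed simp

lemma poisson_random_measure_tendsto_laplace:
  assumes P: "poisson_random_measure M N \<mu>" and F: "\<And>n. F n \<in> borel_measurable \<mu>" "incseq F"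
    and f: "\<And>x. (SUP n. F n x) = f x" and f_fin: "AE \<omega> in M. (\<integral>\<^sup>+x. f x \<partial>N \<omega>) < \<infinity>"
  shows "(\<lambda>n. \<integral>\<omega>. exp (- enn2real (\<integral>\<^sup>+x. F n x \<partial>N \<omega>)) \<partial>M)
       \<longlonglongrightarrow> (\<integral>\<omega>. exp (- enn2real (\<integral>\<^sup>+x. f x \<partial>N \<omega>)) \<partial>M)"
proof -
  interpret prob_space M using poisson_random_measure_prob_space[OF P] .
  note [measurable] = F(1)
  have "(\<lambda>x. SUP n. F n x) \<in> borel_measurable \<mu>" by measurable
  then have f_meas: "f \<in> borel_measurable \<mu>" by (simp add: f)
  show ?thesis
  proof (rule integral_dominated_convergence[where w="\<lambda>_. 1"])
    show "AE \<omega> in M. (\<lambda>n. exp (- enn2real (\<integral>\<^sup>+x. F n x \<partial>N \<omega>)))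
        \<longlonglongrightarrow> exp (- enn2real (\<integral>\<^sup>+x. f x \<partial>N \<omega>))"
      using f_fin AE_space
    proof eventually_elim
      case (elim \<omega>)
      have "(\<integral>\<^sup>+x. f x \<partial>N \<omega>) = (SUP n. \<integral>\<^sup>+x. F n x \<partial>N \<omega>)"
        unfolding f[symmetric]
        by (intro nn_integral_monotone_convergence_SUP[OF F(2)])
           (simp add: measurable_cong_sets[OF poisson_random_measure_sets[OF P elim(2)] refl])
      moreover have "incseq (\<lambda>n. \<integral>\<^sup>+x. F n x \<partial>N \<omega>)"
        using F(2) by (auto simp: incseq_def le_fun_def intro!: nn_integral_mono)
      ultimately have "(\<lambda>n. enn2real (\<integral>\<^sup>+x. F n x \<partial>N \<omega>)) \<longlonglongrightarrow> enn2real (\<integral>\<^sup>+x. f x \<partial>N \<omega>)"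
        using elim(1) tendsto_enn2real_SUP by simp
      from tendsto_exp[OF tendsto_minus[OF this]] show ?case .
    qed
  qed (use measurable_poisson_random_measure_nn_integral[OF P] F(1) f_meas in
       \<open>simp_all add: enn2real_nonneg\<close>)
qed

lemma poisson_random_measure_laplace:
  assumes P: "poisson_random_measure M N \<mu>" and f: "f \<in> borel_measurable \<mu>" "\<And>x. 0 \<le> f x"
    and B: "B \<in> sets \<mu>" "emeasure \<mu> B < \<infinity>" and fB: "\<And>x. x \<in> space \<mu> \<Longrightarrow> x \<notin> B \<Longrightarrow> f x = 0"
  shows "(\<integral>\<omega>. exp (- enn2real (\<integral>\<^sup>+x. ennreal (f x) \<partial>N \<omega>)) \<partial>M) = exp (- (\<integral>x. 1 - exp (- f x) \<partial>\<mu>))"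
proof -
  note [measurable] = f(1)
  have f_ennreal[measurable]: "(\<lambda>x. ennreal (f x)) \<in> borel_measurable \<mu>" by measurable
  obtain F where F: "\<And>i. simple_function \<mu> (F i)" "incseq F" "\<And>i x. F i x < top"
    "\<And>x. (SUP i. F i x) = ennreal (f x)"
    using borel_measurable_implies_simple_function_sequence'[OF f_ennreal] by blast
  have F_le: "F i x \<le> ennreal (f x)" for i x using F(4)[of x] by (metis SUP_upper UNIV_I)
  have F_meas[measurable]: "F i \<in> borel_measurable \<mu>" for i
    using F(1) by (rule borel_measurable_simple_function)
  have F_supp: "x \<in> space \<mu> \<Longrightarrow> F i x \<noteq> 0 \<Longrightarrow> x \<in> B" for i x
    using F_le[of i x] fB by fastforce
  have lim_M: "(\<lambda>n. \<integral>\<omega>. exp (- enn2real (\<integral>\<^sup>+x. F n x \<partial>N \<omega>)) \<partial>M)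
      \<longlonglongrightarrow> (\<integral>\<omega>. exp (- enn2real (\<integral>\<^sup>+x. ennreal (f x) \<partial>N \<omega>)) \<partial>M)"
    using poisson_random_measure_AE_nn_integral_finite[OF P f B fB]
    by (intro poisson_random_measure_tendsto_laplace[OF P F_meas F(2) F(4)])
  have lim_\<mu>: "(\<lambda>n. \<integral>x. 1 - exp (- enn2real (F n x)) \<partial>\<mu>) \<longlonglongrightarrow> (\<integral>x. 1 - exp (- f x) \<partial>\<mu>)"
  proof (rule integral_dominated_convergence[where w="indicator B"])
    show "AE x in \<mu>. norm (1 - exp (- enn2real (F n x))) \<le> indicator B x" for n
    proof (rule AE_I2)
      fix x assume "x \<in> space \<mu>"
      then show "norm (1 - exp (- enn2real (F n x))) \<le> indicator B x"
        using F_supp[of x n] by (cases "F n x = 0") (auto simp: enn2real_nonneg)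
    qed
    show "AE x in \<mu>. (\<lambda>n. 1 - exp (- enn2real (F n x))) \<longlonglongrightarrow> 1 - exp (- f x)"
    proof (rule AE_I2)
      fix x
      have "incseq (\<lambda>n. F n x)" using F(2) by (auto simp: incseq_def le_fun_def)
      then have "(\<lambda>n. enn2real (F n x)) \<longlonglongrightarrow> f x"
        using tendsto_enn2real_SUP[of "\<lambda>n. F n x"] by (simp add: F(4) f(2))
      from tendsto_diff[OF tendsto_const tendsto_exp[OF tendsto_minus[OF this]]]
      show "(\<lambda>n. 1 - exp (- enn2real (F n x))) \<longlonglongrightarrow> 1 - exp (- f x)" .
    qed
  qed (measurable, use B in simp)
  have "(\<integral>\<omega>. exp (- enn2real (\<integral>\<^sup>+x. F n x \<partial>N \<omega>)) \<partial>M)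
      = exp (- (\<integral>x. 1 - exp (- enn2real (F n x)) \<partial>\<mu>))" for n
    by (rule poisson_random_measure_laplace_simple[OF P F(1) _ B]) (simp add: F(3), erule (1) F_supp)
  with lim_M have "(\<lambda>n. exp (- (\<integral>x. 1 - exp (- enn2real (F n x)) \<partial>\<mu>)))
      \<longlonglongrightarrow> (\<integral>\<omega>. exp (- enn2real (\<integral>\<^sup>+x. ennreal (f x) \<partial>N \<omega>)) \<partial>M)"
    by simp
  moreover have "(\<lambda>n. exp (- (\<integral>x. 1 - exp (- enn2real (F n x)) \<partial>\<mu>)))
      \<longlonglongrightarrow> exp (- (\<integral>x. 1 - exp (- f x) \<partial>\<mu>))"
    using lim_\<mu> by (intro tendsto_exp tendsto_minus)
  ultimately show ?thesis by (rule LIMSEQ_unique)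
qed

section \<open>The planar integral of the useful contribution\<close>

lemma nn_integral_exp_minus_Icc:
  fixes v :: real assumes "0 \<le> v"
  shows "(\<integral>\<^sup>+t. ennreal (exp (- t)) * indicator {0..v} t \<partial>lborel) = ennreal (1 - exp (- v))"
proof -
  have "(\<integral>\<^sup>+t. ennreal (exp (- t)) * indicator {0..v} t \<partial>lborel) = ennreal (- exp (- v) - - exp (- 0))"
    by (rule nn_integral_FTC_Icc) (auto intro!: derivative_eq_intros assms)
  then show ?thesis by simp
qed

lemma upper_Gamma_nonneg: "0 \<le> upper_Gamma a x"
  unfolding upper_Gamma_def set_lebesgue_integral_def
  by (intro integral_nonneg_AE AE_I2) (simp add: indicator_def)

lemma measurable_upper_Gamma [measurable]: "upper_Gamma a \<in> borel_measurable borel"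
proof -
  have "upper_Gamma a = (\<lambda>x. \<integral>t. (if x < t then t powr (a - 1) * exp (- t) else 0) \<partial>lborel)"
    by (auto simp: fun_eq_iff upper_Gamma_def set_lebesgue_integral_def indicator_def
        intro!: Bochner_Integration.integral_cong)
  also have "\<dots> \<in> borel_measurable borel"
    by (intro lborel.borel_measurable_lebesgue_integral) measurable
  finally show ?thesis .
qed

lemma nn_integral_upper_Gamma:
  fixes a x :: real assumes a: "0 < a" and x: "0 \<le> x"
  shows "(\<integral>\<^sup>+t. ennreal (t powr (a - 1) * exp (- t)) * indicator {x<..} t \<partial>lborel) = ennreal (upper_Gamma a x)"
proof -
  define h where "h t = indicator {x<..} t * (t powr (a - 1) * exp (- t))" for t :: real
  have h_nonneg: "0 \<le> h t" for t by (simp add: h_def)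
  have "(\<integral>\<^sup>+t. ennreal (h t) \<partial>lborel) \<le> (\<integral>\<^sup>+t. ennreal (indicator {0..} t * t powr (a - 1) / exp t) \<partial>lborel)"
    using x by (intro nn_integral_mono) (auto simp: h_def indicator_def exp_minus divide_inverse)
  also have "\<dots> = ennreal (Gamma a)"
    using Gamma_conv_nn_integral_real[OF a] by simp
  finally have "(\<integral>\<^sup>+t. ennreal (h t) \<partial>lborel) < \<infinity>"
    unfolding infinity_ennreal_def using ennreal_less_top by (rule le_less_trans)
  moreover have "h \<in> borel_measurable lborel" unfolding h_def by measurable
  ultimately have "integrable lborel h"
    using h_nonneg by (intro integrableI_nonneg) auto
  have "(\<integral>\<^sup>+t. ennreal (t powr (a - 1) * exp (- t)) * indicator {x<..} t \<partial>lborel)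
      = (\<integral>\<^sup>+t. ennreal (h t) \<partial>lborel)"
    by (intro nn_integral_cong) (auto simp: h_def indicator_def)
  also have "\<dots> = ennreal (integral\<^sup>L lborel h)"
    using \<open>integrable lborel h\<close> h_nonneg by (intro nn_integral_eq_integral) auto
  also have "integral\<^sup>L lborel h = upper_Gamma a x"
    by (simp add: upper_Gamma_def set_lebesgue_integral_def h_def[abs_def])
  finally show ?thesis .
qed

lemma nn_integral_one_minus_exp_superlevel:
  assumes M: "sigma_finite_measure M" and v[measurable]: "v \<in> borel_measurable M"
    and v_nonneg: "\<And>x. x \<in> space M \<Longrightarrow> 0 \<le> v x"
  shows "(\<integral>\<^sup>+x. ennreal (1 - exp (- v x)) \<partial>M)
       = (\<integral>\<^sup>+t. ennreal (exp (- t)) * indicator {0..} t * emeasure M {x\<in>space M. t \<le> v x} \<partial>lborel)"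
proof -
  interpret pair_sigma_finite M lborel
    using M by (simp add: pair_sigma_finite_def lborel.sigma_finite_measure_axioms)
  have "(\<integral>\<^sup>+x. ennreal (1 - exp (- v x)) \<partial>M)
      = (\<integral>\<^sup>+x. \<integral>\<^sup>+t. ennreal (exp (- t)) * indicator {0..v x} t \<partial>lborel \<partial>M)"
    using v_nonneg by (intro nn_integral_cong) (simp add: nn_integral_exp_minus_Icc)
  also have "\<dots> = (\<integral>\<^sup>+t. \<integral>\<^sup>+x. ennreal (exp (- t)) * indicator {0..v x} t \<partial>M \<partial>lborel)"
  proof (rule Fubini'[symmetric])
    have "(\<lambda>(x, t). ennreal (exp (- t)) * indicator {0..v x} t)
        = (\<lambda>p. ennreal (exp (- snd p)) * (if 0 \<le> snd p \<and> snd p \<le> v (fst p) then 1 else 0))"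
      by (auto simp: fun_eq_iff indicator_def)
    also have "\<dots> \<in> borel_measurable (M \<Otimes>\<^sub>M lborel)" by measurable
    finally show "(\<lambda>(x, t). ennreal (exp (- t)) * indicator {0..v x} t) \<in> borel_measurable (M \<Otimes>\<^sub>M lborel)" .
  qed
  also have "\<dots> = (\<integral>\<^sup>+t. ennreal (exp (- t)) * indicator {0..} t * emeasure M {x\<in>space M. t \<le> v x} \<partial>lborel)"
  proof (intro nn_integral_cong)
    fix t :: real
    have "(\<integral>\<^sup>+x. ennreal (exp (- t)) * indicator {0..v x} t \<partial>M)
        = (\<integral>\<^sup>+x. (ennreal (exp (- t)) * indicator {0..} t) * indicator {x\<in>space M. t \<le> v x} x \<partial>M)"
      by (intro nn_integral_cong) (auto simp: indicator_def)
    also have "\<dots> = ennreal (exp (- t)) * indicator {0..} t * emeasure M {x\<in>space M. t \<le> v x}"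
      by (rule nn_integral_cmult_indicator) measurable
    finally show "(\<integral>\<^sup>+x. ennreal (exp (- t)) * indicator {0..v x} t \<partial>M)
        = ennreal (exp (- t)) * indicator {0..} t * emeasure M {x\<in>space M. t \<le> v x}" .
  qed
  finally show ?thesis .
qed

lemma nn_integral_exp_min_powr:
  fixes m b p :: real
  assumes m: "0 < m" and b: "0 < b" and p: "p < 1"
  shows "(\<integral>\<^sup>+t. ennreal (exp (- t)) * indicator {0<..} t * ennreal (min m (b / t) powr p) \<partial>lborel)
       = ennreal (m powr p * (1 - exp (- (b / m))) + b powr p * upper_Gamma (1 - p) (b / m))"
proof -
  define t0 where "t0 = b / m"
  have t0: "0 < t0" using m b by (simp add: t0_def)
  have "AE t in lborel. ennreal (exp (- t)) * indicator {0<..} t * ennreal (min m (b / t) powr p)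
      = ennreal (m powr p) * (ennreal (exp (- t)) * indicator {0..t0} t)
        + ennreal (b powr p) * (ennreal (t powr ((1 - p) - 1) * exp (- t)) * indicator {t0<..} t)"
    using AE_lborel_singleton[of 0]
  proof eventually_elim
    case (elim t)
    consider "t < 0" | "0 < t" "t \<le> t0" | "t0 < t" using elim t0 by fastforce
    then show ?case
    proof cases
      case 2
      then have "m \<le> b / t" using m by (simp add: t0_def field_simps)
      with 2 show ?thesis by (simp add: indicator_def ennreal_mult'[symmetric] mult_ac)
    next
      case 3
      with t0 have "0 < t" by simp
      have "b < t * m" using 3 m by (simp add: t0_def pos_divide_less_eq)
      then have "b / t < m" using \<open>0 < t\<close> by (simp add: pos_divide_less_eq mult.commute)
      moreover have "(b / t) powr p = b powr p * t powr ((1 - p) - 1)"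
        using b \<open>0 < t\<close> by (simp add: powr_divide powr_minus_divide)
      ultimately show ?thesis using 3 \<open>0 < t\<close> by (simp add: indicator_def ennreal_mult'[symmetric] mult_ac)
    qed (use t0 in \<open>simp add: indicator_def\<close>)
  qed
  then have "(\<integral>\<^sup>+t. ennreal (exp (- t)) * indicator {0<..} t * ennreal (min m (b / t) powr p) \<partial>lborel)
      = ennreal (m powr p) * (\<integral>\<^sup>+t. ennreal (exp (- t)) * indicator {0..t0} t \<partial>lborel)
        + ennreal (b powr p) * (\<integral>\<^sup>+t. ennreal (t powr ((1 - p) - 1) * exp (- t)) * indicator {t0<..} t \<partial>lborel)"
    by (subst nn_integral_cong_AE[OF \<open>AE t in lborel. _\<close>]) (auto simp: nn_integral_add nn_integral_cmult)
  also have "\<dots> = ennreal (m powr p) * ennreal (1 - exp (- t0)) + ennreal (b powr p) * ennreal (upper_Gamma (1 - p) t0)"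
  proof -
    have "(\<integral>\<^sup>+t. ennreal (exp (- t)) * indicator {0..t0} t \<partial>lborel) = ennreal (1 - exp (- t0))"
      using t0 by (intro nn_integral_exp_minus_Icc) simp
    moreover have "(\<integral>\<^sup>+t. ennreal (t powr ((1 - p) - 1) * exp (- t)) * indicator {t0<..} t \<partial>lborel)
        = ennreal (upper_Gamma (1 - p) t0)"
      using t0 p by (intro nn_integral_upper_Gamma) auto
    ultimately show ?thesis by (simp only:)
  qed
  also have "\<dots> = ennreal (m powr p * (1 - exp (- t0)) + b powr p * upper_Gamma (1 - p) t0)"
    using t0 upper_Gamma_nonneg by (simp add: ennreal_mult'[symmetric] ennreal_plus[symmetric] del: ennreal_plus)
  finally show ?thesis by (simp add: t0_def)
qed

lemma powr_le_powr_iff: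
  fixes r c a :: real assumes "0 \<le> r" "0 \<le> c" "0 < a"
  shows "r powr a \<le> c powr a \<longleftrightarrow> r \<le> c"
  using assms by (metis linorder_not_le powr_less_mono2 powr_mono2 less_imp_le)

lemma le_powr_inverse_iff:
  fixes r c a :: real assumes "0 \<le> r" "0 < c" "0 < a"
  shows "r \<le> c powr (1 / a) \<longleftrightarrow> r powr a \<le> c"
  using powr_le_powr_iff[of r "c powr (1 / a)" a] assms by (simp add: powr_powr)

lemma min_DT_pos: "0 < g \<Longrightarrow> 0 < D \<Longrightarrow> 0 \<le> T \<Longrightarrow> 0 < min_DT \<alpha> D T g"
  by (auto simp: min_DT_def)

lemma max_DT_eq_inverse_min_DT: "0 < g \<Longrightarrow> 0 < D \<Longrightarrow> 0 \<le> T \<Longrightarrow> max_DT \<alpha> D T g = 1 / min_DT \<alpha> D T g"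
  by (auto simp: max_DT_def min_DT_def powr_minus_divide max_def min_def field_simps)

lemma useful_contrib_nonneg: "0 \<le> T \<Longrightarrow> 0 \<le> useful_contrib \<alpha> D T z"
  by (auto simp: useful_contrib_def Let_def indicator_def)

lemma measurable_useful_contrib: "useful_contrib \<alpha> D T \<in> borel_measurable (borel \<Otimes>\<^sub>M borel)"
proof -
  have [measurable]: "cball (0::real \<times> real) D \<in> sets borel" by simp
  show ?thesis unfolding useful_contrib_def Let_def by measurable
qed

lemma useful_contrib_superlevel_set:
  fixes g t s \<alpha> D T :: real
  assumes g: "0 < g" and t: "0 < t" and s: "0 < s" and \<alpha>: "0 < \<alpha>" and D: "0 < D" and T: "0 \<le> T"
  shows "{x. t \<le> s * useful_contrib \<alpha> D T (x, g)}
       = cball 0 (min (min_DT \<alpha> D T g) (s * g / t) powr (1 / \<alpha>)) - {0}"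
proof -
  define c where "c = min (min_DT \<alpha> D T g) (s * g / t)"
  have c: "0 < c" using min_DT_pos[OF g D T] g t s by (simp add: c_def)
  have nonzero: "t \<le> s * useful_contrib \<alpha> D T (x, g) \<longleftrightarrow> norm x \<le> c powr (1 / \<alpha>)" if "x \<noteq> 0" for x
  proof -
    define q where "q = norm x powr \<alpha>"
    have q: "0 < q" using that by (simp add: q_def)
    have "norm x powr (- \<alpha>) = 1 / q" by (simp add: q_def powr_minus_divide)
    then have "t \<le> s * useful_contrib \<alpha> D T (x, g) \<longleftrightarrow> norm x \<le> D \<and> T \<le> g * (1 / q) \<and> t \<le> s * (g * (1 / q))"
      using t s by (auto simp: useful_contrib_def indicator_def)
    also have "\<dots> \<longleftrightarrow> q \<le> D powr \<alpha> \<and> T * q \<le> g \<and> q \<le> s * g / t"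
      using powr_le_powr_iff[of "norm x" D \<alpha>] D \<alpha> q t by (simp add: q_def field_simps)
    also have "\<dots> \<longleftrightarrow> q \<le> c"
      using T g q by (auto simp: c_def min_DT_def field_simps)
    also have "\<dots> \<longleftrightarrow> norm x \<le> c powr (1 / \<alpha>)"
      unfolding q_def using c \<alpha> by (intro le_powr_inverse_iff[symmetric]) auto
    finally show ?thesis .
  qed
  have zero: "\<not> t \<le> s * useful_contrib \<alpha> D T (0, g)" using t by (simp add: useful_contrib_def)
  show ?thesis
  proof (intro set_eqI)
    fix x
    show "x \<in> {x. t \<le> s * useful_contrib \<alpha> D T (x, g)}
        \<longleftrightarrow> x \<in> cball 0 (min (min_DT \<alpha> D T g) (s * g / t) powr (1 / \<alpha>)) - {0}"
      using nonzero[of x] zero by (cases "x = 0") (auto simp: c_def)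
  qed
qed

lemma emeasure_cball_minus_centre:
  fixes r :: real assumes "0 \<le> r"
  shows "emeasure lborel (cball (0::real \<times> real) r - {0}) = ennreal (pi * r\<^sup>2)"
proof -
  have "emeasure lborel (cball (0::real \<times> real) r - {0}) = emeasure lborel (cball (0::real \<times> real) r)"
    by (rule emeasure_Diff_null_set) auto
  then show ?thesis using assms by (simp add: emeasure_cball unit_ball_vol_2 power2_eq_square)
qed

lemma emeasure_useful_contrib_superlevel_set:
  fixes g t s \<alpha> D T :: real
  assumes g: "0 < g" and t: "0 < t" and s: "0 < s" and \<alpha>: "0 < \<alpha>" and D: "0 < D" and T: "0 \<le> T"
  shows "emeasure lborel {x. t \<le> s * useful_contrib \<alpha> D T (x, g)}
       = ennreal (pi * min (min_DT \<alpha> D T g) (s * g / t) powr (2 / \<alpha>))"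
proof -
  define c where "c = min (min_DT \<alpha> D T g) (s * g / t)"
  have "0 < c" using min_DT_pos[OF g D T] s g t by (simp add: c_def)
  then have "(c powr (1 / \<alpha>))\<^sup>2 = c powr (2 / \<alpha>)"
    by (simp add: powr_realpow[symmetric] powr_powr)
  then show ?thesis
    using useful_contrib_superlevel_set[OF assms] \<alpha>
    by (simp add: c_def emeasure_cball_minus_centre)
qed

definition useful_exponent :: "real \<Rightarrow> real \<Rightarrow> real \<Rightarrow> real \<Rightarrow> real \<Rightarrow> real" where
  "useful_exponent \<alpha> D T s g =
     min_DT \<alpha> D T g powr (2 / \<alpha>) * (1 - exp (- s * g * max_DT \<alpha> D T g))
     + (s * g) powr (2 / \<alpha>) * upper_Gamma (1 - 2 / \<alpha>) (s * g * max_DT \<alpha> D T g)"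

lemma measurable_useful_exponent [measurable]: "useful_exponent \<alpha> D T s \<in> borel_measurable borel"
  unfolding useful_exponent_def min_DT_def max_DT_def by measurable

lemma nn_integral_useful_contrib:
  fixes g s \<alpha> D T :: real
  assumes g: "0 \<le> g" and s: "0 < s" and \<alpha>: "2 < \<alpha>" and D: "0 < D" and T: "0 \<le> T"
  shows "(\<integral>\<^sup>+x. ennreal (1 - exp (- (s * useful_contrib \<alpha> D T (x, g)))) \<partial>lborel)
       = ennreal (pi * useful_exponent \<alpha> D T s g)"
proof (cases "g = 0")
  case True
  have "useful_contrib \<alpha> D T (x, 0) = 0" for x by (simp add: useful_contrib_def)
  with True show ?thesis by (simp add: useful_exponent_def)
next
  case False
  with g have g: "0 < g" by simp
  define m where "m = min_DT \<alpha> D T g"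
  have m: "0 < m" using min_DT_pos[OF g D T] by (simp add: m_def)
  have level: "emeasure lborel {x. t \<le> s * useful_contrib \<alpha> D T (x, g)}
      = ennreal (pi * min m (s * g / t) powr (2 / \<alpha>))" if "0 < t" for t
    using emeasure_useful_contrib_superlevel_set[OF g that s _ D T] \<alpha> by (simp add: m_def)
  have "(\<integral>\<^sup>+x. ennreal (1 - exp (- (s * useful_contrib \<alpha> D T (x, g)))) \<partial>lborel)
      = (\<integral>\<^sup>+t. ennreal (exp (- t)) * indicator {0..} t
           * emeasure lborel {x \<in> space lborel. t \<le> s * useful_contrib \<alpha> D T (x, g)} \<partial>lborel)"
    using measurable_useful_contrib[of \<alpha> D T] s useful_contrib_nonneg[OF T]
    by (intro nn_integral_one_minus_exp_superlevel lborel.sigma_finite_measure_axioms)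
       (auto simp: borel_prod)
  also have "\<dots> = (\<integral>\<^sup>+t. ennreal pi * (ennreal (exp (- t)) * indicator {0<..} t
                    * ennreal (min m (s * g / t) powr (2 / \<alpha>))) \<partial>lborel)"
  proof (rule nn_integral_cong_AE)
    show "AE t in lborel. ennreal (exp (- t)) * indicator {0..} t
        * emeasure lborel {x \<in> space lborel. t \<le> s * useful_contrib \<alpha> D T (x, g)}
      = ennreal pi * (ennreal (exp (- t)) * indicator {0<..} t * ennreal (min m (s * g / t) powr (2 / \<alpha>)))"
      using AE_lborel_singleton[of 0]
    proof eventually_elim
      case (elim t)
      show ?case
      proof (cases "0 < t")
        case True
        then show ?thesis by (simp add: level ennreal_mult'[symmetric] mult_ac)
      qed (use elim in \<open>simp add: indicator_def\<close>)
    qed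
  qed
  also have "\<dots> = ennreal pi * ennreal (m powr (2 / \<alpha>) * (1 - exp (- (s * g / m)))
                    + (s * g) powr (2 / \<alpha>) * upper_Gamma (1 - 2 / \<alpha>) (s * g / m))"
    using m s g \<alpha> by (simp add: nn_integral_cmult nn_integral_exp_min_powr)
  also have "\<dots> = ennreal (pi * useful_exponent \<alpha> D T s g)"
    by (simp add: ennreal_mult'[symmetric] useful_exponent_def m_def max_DT_eq_inverse_min_DT[OF g D T])
  finally show ?thesis .
qed

section \<open>Integration against the marked intensity\<close>

lemma useful_exponent_nonneg:
  assumes g: "0 \<le> g" and s: "0 \<le> s" and D: "0 < D"
  shows "0 \<le> useful_exponent \<alpha> D T s g"
proof -
  have "0 \<le> max_DT \<alpha> D T g" using D by (simp add: max_DT_def le_max_iff_disj)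
  then have "exp (- s * g * max_DT \<alpha> D T g) \<le> 1" using g s by simp
  then show ?thesis
    unfolding useful_exponent_def by (intro add_nonneg_nonneg mult_nonneg_nonneg upper_Gamma_nonneg) auto
qed

lemma useful_exponent_le:
  fixes g s \<alpha> D T :: real
  assumes g: "0 \<le> g" and s: "0 < s" and \<alpha>: "2 < \<alpha>" and D: "0 < D" and T: "0 \<le> T"
  shows "useful_exponent \<alpha> D T s g \<le> D\<^sup>2"
proof -
  have "ennreal (pi * useful_exponent \<alpha> D T s g)
      = (\<integral>\<^sup>+x. ennreal (1 - exp (- (s * useful_contrib \<alpha> D T (x, g)))) \<partial>lborel)"
    by (rule nn_integral_useful_contrib[OF assms, symmetric])
  also have "\<dots> \<le> (\<integral>\<^sup>+x. indicator (cball (0::real \<times> real) D - {0}) x \<partial>lborel)"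
    using s useful_contrib_nonneg[OF T]
    by (intro nn_integral_mono) (auto simp: indicator_def useful_contrib_def)
  also have "\<dots> = ennreal (pi * D\<^sup>2)"
    using D by (simp add: emeasure_cball_minus_centre)
  finally show ?thesis by (simp add: ennreal_le_iff)
qed

lemma enn2real_nn_integral_cmult:
  assumes c: "0 \<le> c" and f: "f \<in> borel_measurable K" "\<And>x. 0 \<le> f x"
  shows "enn2real (\<integral>\<^sup>+x. ennreal (c * f x) \<partial>K) = c * enn2real (\<integral>\<^sup>+x. ennreal (f x) \<partial>K)"
proof -
  have "(\<integral>\<^sup>+x. ennreal (c * f x) \<partial>K) = ennreal c * (\<integral>\<^sup>+x. ennreal (f x) \<partial>K)"
    using c f by (simp add: ennreal_mult nn_integral_cmult)
  then show ?thesis using c by (simp add: enn2real_mult)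
qed

lemma sets_marked_intensity:
  "sets G = sets borel \<Longrightarrow> sets (marked_intensity lam G) = sets (borel \<Otimes>\<^sub>M borel)"
  unfolding marked_intensity_def sets_scale_measure by (intro sets_pair_measure_cong) auto

lemma emeasure_marked_intensity_Times_UNIV:
  assumes G: "prob_space G" "sets G = sets borel" and A: "A \<in> sets borel"
  shows "emeasure (marked_intensity lam G) (A \<times> UNIV) = ennreal lam * emeasure lborel A"
proof -
  interpret G: prob_space G by (rule G(1))
  have UNIV: "space G = UNIV" using sets_eq_imp_space_eq[OF G(2)] by simp
  have "emeasure (lborel \<Otimes>\<^sub>M G) (A \<times> space G) = emeasure lborel A * emeasure G (space G)"
    using A by (intro G.emeasure_pair_measure_Times) auto
  then show ?thesis using G.emeasure_space_1 by (simp add: marked_intensity_def UNIV)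
qed

lemma nn_integral_marked_intensity:
  assumes G: "sigma_finite_measure G" and h: "h \<in> borel_measurable (lborel \<Otimes>\<^sub>M G)"
  shows "(\<integral>\<^sup>+z. h z \<partial>marked_intensity lam G) = ennreal lam * (\<integral>\<^sup>+g. \<integral>\<^sup>+x. h (x, g) \<partial>lborel \<partial>G)"
proof -
  interpret pair_sigma_finite lborel G
    using G by (simp add: pair_sigma_finite_def lborel.sigma_finite_measure_axioms)
  show ?thesis
    unfolding marked_intensity_def nn_integral_scale_measure[OF h] nn_integral_snd[OF h] ..
qed

lemma integral_marked_intensity_useful_contrib:
  fixes lam \<alpha> D T s :: real and G :: "real measure"
  assumes lam: "0 \<le> lam" and \<alpha>: "2 < \<alpha>" and D: "0 < D" and T: "0 \<le> T" and s: "0 < s"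
    and G: "prob_space G" "sets G = sets borel" "AE g in G. 0 \<le> g"
  shows "(\<integral>z. 1 - exp (- (s * useful_contrib \<alpha> D T z)) \<partial>marked_intensity lam G)
       = lam * pi * (\<integral>g. useful_exponent \<alpha> D T s g \<partial>G)"
proof -
  interpret G: prob_space G by (rule G(1))
  have sets_lborel_G: "sets (lborel \<Otimes>\<^sub>M G) = sets (borel \<Otimes>\<^sub>M borel)"
    by (intro sets_pair_measure_cong) (auto simp: G(2))
  have u: "useful_contrib \<alpha> D T \<in> borel_measurable (lborel \<Otimes>\<^sub>M G)"
    "useful_contrib \<alpha> D T \<in> borel_measurable (marked_intensity lam G)"
    using measurable_useful_contrib[of \<alpha> D T]
    by (simp_all add: measurable_cong_sets[OF sets_lborel_G refl]
        measurable_cong_sets[OF sets_marked_intensity[OF G(2)] refl])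
  have E_meas: "useful_exponent \<alpha> D T s \<in> borel_measurable G"
    using measurable_useful_exponent by (simp add: measurable_cong_sets[OF G(2) refl])
  have E_bounded: "AE g in G. norm (useful_exponent \<alpha> D T s g) \<le> D\<^sup>2"
    using G(3) by eventually_elim
      (simp add: useful_exponent_nonneg useful_exponent_le \<alpha> D T s less_imp_le)
  have "(\<integral>\<^sup>+z. ennreal (1 - exp (- (s * useful_contrib \<alpha> D T z))) \<partial>marked_intensity lam G)
      = ennreal lam * (\<integral>\<^sup>+g. ennreal (pi * useful_exponent \<alpha> D T s g) \<partial>G)"
    using u(1) G(3)
    by (simp add: nn_integral_marked_intensity G.sigma_finite_measure_axioms)
       (intro arg_cong2[where f="(*)"] refl nn_integral_cong_AE,
        auto elim!: eventually_mono simp: nn_integral_useful_contrib \<alpha> D T s)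
  also have "\<dots> = ennreal (lam * (pi * (\<integral>g. useful_exponent \<alpha> D T s g \<partial>G)))"
  proof -
    have "integrable G (useful_exponent \<alpha> D T s)"
      using E_bounded E_meas by (rule G.integrable_const_bound)
    then have "(\<integral>\<^sup>+g. ennreal (pi * useful_exponent \<alpha> D T s g) \<partial>G)
        = ennreal (\<integral>g. pi * useful_exponent \<alpha> D T s g \<partial>G)"
      using G(3) by (intro nn_integral_eq_integral)
        (auto elim!: eventually_mono intro!: mult_nonneg_nonneg useful_exponent_nonneg simp: D less_imp_le[OF s])
    then show ?thesis using lam by (simp add: ennreal_mult'[symmetric])
  qed
  moreover have "0 \<le> (\<integral>g. useful_exponent \<alpha> D T s g \<partial>G)"
    using G(3) by (intro integral_nonneg_AE)
      (auto elim!: eventually_mono intro!: useful_exponent_nonneg simp: D less_imp_le[OF s])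
  ultimately show ?thesis
    using u(2) s useful_contrib_nonneg[OF T] lam
    by (subst integral_eq_nn_integral) (auto simp: mult.assoc)
qed

lemma scaled_useful_power:
  assumes s: "0 \<le> s" and T: "0 \<le> T" and sets_N: "sets (N \<omega>) = sets (borel \<Otimes>\<^sub>M borel)"
  shows "s * useful_power N \<alpha> D T \<omega> = enn2real (\<integral>\<^sup>+z. ennreal (s * useful_contrib \<alpha> D T z) \<partial>N \<omega>)"
proof -
  have "useful_contrib \<alpha> D T \<in> borel_measurable (N \<omega>)"
    using measurable_useful_contrib by (simp add: measurable_cong_sets[OF sets_N refl])
  then show ?thesis
    using s useful_contrib_nonneg[OF T] by (simp add: useful_power_def enn2real_nn_integral_cmult)
qed

lemma poisson_random_measure_laplace_useful_contrib:
  assumes P: "poisson_random_measure M N (marked_intensity lam G)"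
    and G: "prob_space G" "sets G = sets borel" and D: "0 < D" and T: "0 \<le> T" and s: "0 \<le> s"
  shows "(\<integral>\<omega>. exp (- enn2real (\<integral>\<^sup>+z. ennreal (s * useful_contrib \<alpha> D T z) \<partial>N \<omega>)) \<partial>M)
       = exp (- (\<integral>z. 1 - exp (- (s * useful_contrib \<alpha> D T z)) \<partial>marked_intensity lam G))"
proof (rule poisson_random_measure_laplace[OF P])
  define B where "B = cball (0::real \<times> real) D \<times> (UNIV :: real set)"
  note sets_\<mu> = sets_marked_intensity[OF G(2), of lam]
  show "(\<lambda>z. s * useful_contrib \<alpha> D T z) \<in> borel_measurable (marked_intensity lam G)"
    using measurable_useful_contrib[of \<alpha> D T] by (simp add: measurable_cong_sets[OF sets_\<mu> refl])
  show "0 \<le> s * useful_contrib \<alpha> D T z" for z using s useful_contrib_nonneg[OF T] by simp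
  show "B \<in> sets (marked_intensity lam G)"
    unfolding B_def sets_\<mu> by (intro pair_measureI) auto
  show "emeasure (marked_intensity lam G) B < \<infinity>"
    using D emeasure_marked_intensity_Times_UNIV[OF G, of "cball 0 D" lam]
    by (simp add: B_def emeasure_cball ennreal_mult_less_top)
  show "s * useful_contrib \<alpha> D T z = 0" if "z \<notin> B" for z
    using that by (cases z) (simp add: B_def useful_contrib_def)
qed

theorem lemma2:
  fixes M :: "'w measure"
    and N :: "'w \<Rightarrow> ((real \<times> real) \<times> real) measure"
    and G :: "real measure"
    and lam \<alpha> D T s :: real
  assumes "lam > 0" and "\<alpha> > 2" and "D > 0" and "T \<ge> 0" and "s > 0"
    and "prob_space G" and "sets G = sets borel"
    and "AE g in G. g \<ge> 0"
    and "integrable G (\<lambda>g. g)" and "(\<integral>g. g \<partial>G) = 1"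
    and "integrable G (\<lambda>g. g\<^sup>2)"
    and "poisson_random_measure M N (marked_intensity lam G)"
  shows "(\<integral>\<omega>. exp (- s * useful_power N \<alpha> D T \<omega>) \<partial>M)
       = exp (- (lam * pi * (\<integral>g.
            min_DT \<alpha> D T g powr (2 / \<alpha>) * (1 - exp (- s * g * max_DT \<alpha> D T g))
          + (s * g) powr (2 / \<alpha>) * upper_Gamma (1 - 2 / \<alpha>) (s * g * max_DT \<alpha> D T g) \<partial>G)))"
proof -
  note lam = assms(1) and \<alpha> = assms(2) and D = assms(3) and T = assms(4) and s = assms(5)
    and G = assms(6,7,8) and P = assms(12)
  have "s * useful_power N \<alpha> D T \<omega> = enn2real (\<integral>\<^sup>+z. ennreal (s * useful_contrib \<alpha> D T z) \<partial>N \<omega>)"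
    if "\<omega> \<in> space M" for \<omega>
    using s T poisson_random_measure_sets[OF P that] sets_marked_intensity[OF G(2)]
    by (intro scaled_useful_power) auto
  then have "(\<integral>\<omega>. exp (- s * useful_power N \<alpha> D T \<omega>) \<partial>M)
      = (\<integral>\<omega>. exp (- enn2real (\<integral>\<^sup>+z. ennreal (s * useful_contrib \<alpha> D T z) \<partial>N \<omega>)) \<partial>M)"
    by (intro Bochner_Integration.integral_cong) auto
  also have "\<dots> = exp (- (\<integral>z. 1 - exp (- (s * useful_contrib \<alpha> D T z)) \<partial>marked_intensity lam G))"
    using P G D T s by (intro poisson_random_measure_laplace_useful_contrib) auto
  also have "(\<integral>z. 1 - exp (- (s * useful_contrib \<alpha> D T z)) \<partial>marked_intensity lam G)
      = lam * pi * (\<integral>g. useful_exponent \<alpha> D T s g \<partial>G)"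
    using lam \<alpha> D T s G by (intro integral_marked_intensity_useful_contrib) auto
  finally show ?thesis by (simp add: useful_exponent_def)
qed

end
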